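(* Let $n\geq 0$ and $r\geq 0$ be integers and let $k\in\mathbf{Z}$. Then, as polynomials in $x$, \begin{align*} \tilde{A}_{n}^{(r,k)}(x)=\sum_{j=0}^{n}\Bigg\{\sum_{m=j}^{n}\sum_{l=0}^{m-j}(-1)^{m}\frac{\binom{m}{l}\binom{m-l}{j}}{\binom{m-l-j+r}{r}(l+1)^{k}}\, S_{1}(n,m)\,S_{2}(m-l-j+r,r)\Bigg\}(-x)^{j}. \end{align*}
   Context: For $k\in\mathbf{Z}$, the poly-logarithm factorial function is the formal power series $Lif_{k}(x)=\sum_{m=0}^{\infty}\frac{x^{m}}{m!(m+1)^{k}}$. For integers $r\geq 0$ and $k\in\mathbf{Z}$, the higher-order Cauchy of the second kind and poly-Cauchy of the second kind mixed type polynomials $\tilde{A}_{n}^{(r,k)}(x)$ are defined by the generating function \[\left(\frac{t}{(1+t)\log(1+t)}\right)^{r}Lif_{k}\left(-\log(1+t)\right)(1+t)^{x}=\sum_{n=0}^{\infty}\tilde{A}_{n}^{(r,k)}(x)\frac{t^{n}}{n!}.\] $S_{1}(n,m)$ denotes the (signed) Stirling numbers of the first kind, defined by $(x)_{n}=x(x-1)\cdots(x-n+1)=\sum_{m=0}^{n}S_{1}(n,m)x^{m}$, and $S_{2}(n,m)$ denotes the Stirling numbers of the second kind, defined by $\frac{(e^{x}-1)^{m}}{m!}=\sum_{l\geq m}S_{2}(l,m)\frac{x^{l}}{l!}$. *)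

theory Defs
  imports "HOL-Computational_Algebra.Formal_Power_Series" "HOL-Combinatorics.Stirling"
begin

definition Lif :: "int \<Rightarrow> real fps" where
  "Lif k = Abs_fps (\<lambda>m. 1 / (fact m * (of_nat (m + 1)) powi k))"

text \<open>Generating function of the mixed-type polynomials, with x a real parameter:
  (t/((1+t) log(1+t)))^r * Lif_k(-log(1+t)) * (1+t)^x.
  Here fps_ln 1 = log(1+t), fps_binomial x = (1+t)^x.\<close>
definition A_gen :: "nat \<Rightarrow> int \<Rightarrow> real \<Rightarrow> real fps" where
  "A_gen r k x = (fps_X / ((1 + fps_X) * fps_ln 1)) ^ r * (Lif k oo (- fps_ln 1)) * fps_binomial x"

definition A_tilde :: "nat \<Rightarrow> int \<Rightarrow> nat \<Rightarrow> real \<Rightarrow> real" where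
  "A_tilde r k n x = fact n * fps_nth (A_gen r k x) n"

text \<open>Signed Stirling numbers of the first kind: (x)_n = sum_m S1(n,m) x^m.\<close>
definition S1 :: "nat \<Rightarrow> nat \<Rightarrow> int" where
  "S1 n m = (-1) ^ (n - m) * int (stirling n m)"

definition S2 :: "nat \<Rightarrow> nat \<Rightarrow> nat" where
  "S2 n m = Stirling n m"

end

theory Submission
  imports Defs
begin

text \<open>
  Since log(1+t) composed with e^u - 1 is the identity, the generating function equals
  H(log(1+t)) with H(u) = e^(xu) Lif_k(-u) ((1 - e^(-u))/u)^r.  The coefficients of the powers
  log(1+t)^m are m!/n! S1(n,m), so n! [t^n] H(log(1+t)) is the Stirling transform
  sum_m S1(n,m) m! [u^m] H(u).  The coefficients of (1 - e^(-u))^r are (-1)^(p-r) r! S2(p,r)/p!,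
  so expanding H as a triple Cauchy product and exchanging the order of the sums over m and
  the exponent j of x gives the formula.
\<close>

unbundle fps_syntax

lemma fps_nth_exp_minus_one_power:
  "((fps_exp (1::'a::field_char_0) - 1) ^ r) $ p = fact r * of_nat (Stirling p r) / fact p"
proof (induction r arbitrary: p)
  case 0
  show ?case by (cases p) simp_all
next
  case (Suc r)
  note IH = Suc.IH
  define E where "E = fps_exp (1::'a) - 1"
  define G where "G = E ^ Suc r"
  have deriv: "fps_deriv G = of_nat (Suc r) * (G + E ^ r)"
    unfolding G_def E_def fps_deriv_power' by (simp add: algebra_simps)
  have coeff_rec: "of_nat (Suc p) * G $ Suc p = of_nat (Suc r) * (G $ p + (E ^ r) $ p)" for p
    using arg_cong[OF deriv, of "\<lambda>f. f $ p"] by (simp add: fps_of_nat[symmetric] del: of_nat_Suc)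
  have "G $ p = fact (Suc r) * of_nat (Stirling p (Suc r)) / fact p" for p
  proof (induction p)
    case 0
    show ?case by (simp add: G_def E_def fps_nth_power_0)
  next
    case (Suc p)
    from coeff_rec[of p] show ?case
      unfolding Suc.IH IH[folded E_def] by (simp add: field_simps del: of_nat_Suc) (simp add: algebra_simps)
  qed
  then show ?case by (simp add: G_def E_def)
qed

lemma S1_Suc_Suc: "S1 (Suc n) (Suc m) = S1 n m - int n * S1 n (Suc m)"
proof (cases "m < n")
  case True
  then have "Suc n - Suc m = Suc (n - Suc m)" "n - m = Suc (n - Suc m)" by auto
  then show ?thesis unfolding S1_def by (simp add: algebra_simps)
next
  case False
  then show ?thesis unfolding S1_def by (cases "m = n") auto
qed

lemma fps_nth_ln_power:
  "(fps_ln (1::'a::field_char_0) ^ m) $ n = fact m / fact n * of_int (S1 n m)"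
proof (induction m arbitrary: n)
  case 0
  show ?case by (cases n) (simp_all add: S1_def)
next
  case (Suc m)
  note IH = Suc.IH
  define L where "L = fps_ln (1::'a)"
  define G where "G = L ^ Suc m"
  have unit: "(1 + fps_X :: 'a fps) * inverse (1 + fps_X) = 1"
    by (rule inverse_mult_eq_1') simp
  have "fps_deriv G + fps_X * fps_deriv G = (1 + fps_X) * fps_deriv G"
    by (simp add: algebra_simps)
  also have "\<dots> = of_nat (Suc m) * L ^ m * ((1 + fps_X) * inverse (1 + fps_X))"
    unfolding G_def L_def fps_deriv_power' by (simp add: fps_ln_deriv algebra_simps)
  finally have deriv: "fps_deriv G + fps_X * fps_deriv G = of_nat (Suc m) * L ^ m"
    by (simp only: unit mult_1_right)
  have coeff_rec: "of_nat (Suc n) * G $ Suc n + of_nat n * G $ n = of_nat (Suc m) * (L ^ m) $ n" for n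
    using arg_cong[OF deriv, of "\<lambda>f. f $ n"]
    by (cases n) (simp_all add: fps_of_nat[symmetric] del: of_nat_Suc)
  have "G $ n = fact (Suc m) / fact n * of_int (S1 n (Suc m))" for n
  proof (induction n)
    case 0
    show ?case by (simp add: G_def L_def fps_nth_power_0 S1_def)
  next
    case (Suc n)
    from coeff_rec[of n] show ?case
      unfolding Suc.IH IH[folded L_def] S1_Suc_Suc
      by (simp add: field_simps del: of_nat_Suc)
  qed
  then show ?case by (simp add: G_def L_def)
qed

lemma fps_exp_compose_ln: "fps_exp c oo fps_ln (1::'a::field_char_0) = fps_binomial c"
proof -
  let ?L = "fps_ln (1::'a)"
  have "fps_deriv (fps_exp c oo ?L) = (fps_const c * fps_exp c oo ?L) * fps_deriv ?L"
    by (simp add: fps_compose_deriv)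
  also have "\<dots> = fps_const c * (fps_exp c oo ?L) / (1 + fps_X)"
    by (simp add: fps_compose_mult_distrib fps_ln_deriv fps_divide_unit)
  finally show ?thesis
    by (subst fps_binomial_ODE_unique'[symmetric]) simp
qed

lemma one_minus_exp_neg_divide_X_times_X:
  "(1 - fps_exp (-1)) / fps_X * fps_X = (1 - fps_exp (-1) :: 'a::field_char_0 fps)"
  by (intro fps_ext) (simp add: fps_mult_fps_X_commute[symmetric])

lemma fps_nth_one_minus_exp_neg_div_X_power:
  "(((1 - fps_exp (-1)) / fps_X) ^ r) $ q
     = (-1) ^ q * fact r * of_nat (Stirling (q + r) r) / (fact (q + r) :: 'a::field_char_0)"
proof -
  define D :: "'a fps" where "D = 1 - fps_exp (-1)"
  have "D = - ((fps_exp 1 - 1) oo - fps_X)"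
    by (simp add: D_def fps_compose_sub_distrib)
  moreover have "(- fps_X :: 'a fps) $ 0 = 0" by simp
  ultimately have D_power: "D ^ r = (-1) ^ r * ((fps_exp 1 - 1) ^ r oo - fps_X)"
    by (simp only: power_minus[of "fps_exp 1 - 1 oo - fps_X"] fps_compose_power)
  have sign_nth: "((-1) ^ r * G) $ n = (-1) ^ r * G $ n" for G :: "'a fps" and n
    by (simp add: minus_one_power_iff)
  have "(D / fps_X) ^ r * fps_X ^ r = D ^ r"
    by (simp only: D_def one_minus_exp_neg_divide_X_times_X flip: power_mult_distrib)
  then have "((D / fps_X) ^ r) $ q = (D ^ r) $ (q + r)"
    by (metis fps_X_power_mult_right_nth add_diff_cancel_right' not_add_less2)
  also have "\<dots> = (-1) ^ r * (-1) ^ (q + r) * ((fps_exp 1 - 1) ^ r) $ (q + r)"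
    by (simp only: D_power sign_nth fps_compose_uminus' fps_nth_Abs_fps mult.assoc)
  also have "\<dots> = (-1) ^ q * ((fps_exp 1 - 1) ^ r) $ (q + r)"
    by (simp add: power_add flip: mult.assoc power_mult_distrib)
  finally show ?thesis
    by (simp add: D_def fps_nth_exp_minus_one_power mult.assoc)
qed

lemma fps_X_divide_one_plus_X_ln:
  "fps_X / ((1 + fps_X) * fps_ln 1) = ((1 - fps_exp (-1)) / fps_X) oo fps_ln (1::'a::field_char_0)"
proof -
  define L where "L = fps_ln (1::'a)"
  define P where "P = (1 - fps_exp (-1)) / (fps_X :: 'a fps)"
  have "(P oo L) * L = (P * fps_X) oo L"
    by (simp add: L_def fps_compose_mult_distrib)
  also have "\<dots> = 1 - inverse (1 + fps_X)"
    unfolding P_def one_minus_exp_neg_divide_X_times_X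
    by (simp add: L_def fps_compose_sub_distrib fps_exp_compose_ln fps_binomial_minus_one)
  finally have "(P oo L) * ((1 + fps_X) * L) = (1 + fps_X) * (1 - inverse (1 + fps_X))"
    by (simp add: ac_simps)
  also have "\<dots> = fps_X"
    by (simp add: right_diff_distrib inverse_mult_eq_1')
  finally have "(P oo L) * ((1 + fps_X) * L) = fps_X" .
  moreover have "(1 + fps_X) * L \<noteq> 0"
  proof -
    have "((1 + fps_X) * L) $ 1 = 1" by (simp add: L_def fps_ln_nth)
    then show ?thesis by (metis fps_zero_nth zero_neq_one)
  qed
  ultimately show ?thesis
    by (metis P_def L_def nonzero_mult_div_cancel_right)
qed

lemma A_gen_eq_compose_ln:
  "A_gen r k x = (fps_exp x * ((Lif k oo - fps_X) * ((1 - fps_exp (-1)) / fps_X) ^ r)) oo fps_ln 1"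
proof -
  define L where "L = fps_ln (1::real)"
  define P where "P = (1 - fps_exp (-1)) / (fps_X :: real fps)"
  define M where "M = Lif k oo - fps_X"
  have L0: "L $ 0 = 0" by (simp add: L_def)
  have "Lif k oo - L = M oo L"
    using fps_compose_assoc[OF L0, of "- fps_X" "Lif k"] by (simp add: M_def fps_compose_uminus L0)
  then have "A_gen r k x = (P oo L) ^ r * (M oo L) * (fps_exp x oo L)"
    by (simp only: A_gen_def L_def P_def fps_X_divide_one_plus_X_ln fps_exp_compose_ln)
  also have "\<dots> = (fps_exp x * (M * P ^ r)) oo L"
    by (simp only: fps_compose_power[OF L0] fps_compose_mult_distrib[OF L0] ac_simps)
  finally show ?thesis by (simp only: L_def P_def M_def)
qed

lemma fact_times_fps_nth_compose_ln:
  "fact n * (H oo fps_ln 1) $ n = (\<Sum>m = 0..n. fact m * of_int (S1 n m) * H $ m :: 'a::field_char_0)"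
  by (simp add: fps_compose_nth fps_nth_ln_power sum_distrib_left mult_ac)

lemma sum_triangle_swap:
  fixes f :: "nat \<Rightarrow> nat \<Rightarrow> 'a::comm_monoid_add"
  shows "(\<Sum>m = 0..n. \<Sum>j = 0..m. f m j) = (\<Sum>j = 0..n. \<Sum>m = j..n. f m j)"
proof -
  have restrict: "sum g {i \<in> {0..n}. P i} = (\<Sum>i = 0..n. if P i then g i else 0)"
    for g :: "nat \<Rightarrow> 'a" and P by (rule sum.inter_filter) simp
  have "(\<Sum>m = 0..n. \<Sum>j = 0..m. f m j) = (\<Sum>m = 0..n. \<Sum>j = 0..n. if j \<le> m then f m j else 0)"
  proof (rule sum.cong[OF refl])
    fix m assume "m \<in> {0..n}"
    then have "{0..m} = {j \<in> {0..n}. j \<le> m}" by auto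
    then show "(\<Sum>j = 0..m. f m j) = (\<Sum>j = 0..n. if j \<le> m then f m j else 0)"
      by (simp only: restrict)
  qed
  also have "\<dots> = (\<Sum>j = 0..n. \<Sum>m = 0..n. if j \<le> m then f m j else 0)"
    by (rule sum.swap)
  also have "\<dots> = (\<Sum>j = 0..n. \<Sum>m = j..n. f m j)"
  proof (rule sum.cong[OF refl])
    fix j
    have "{j..n} = {m \<in> {0..n}. j \<le> m}" by auto
    then show "(\<Sum>m = 0..n. if j \<le> m then f m j else 0) = (\<Sum>m = j..n. f m j)"
      by (simp only: restrict)
  qed
  finally show ?thesis .
qed

lemma summand_eq_coeff_product:
  fixes x w :: "'a::field_char_0"
  assumes "j + l \<le> m" and "w \<noteq> 0"
  shows "(-1) ^ m * (of_nat (m choose l) * of_nat ((m - l) choose j))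
           / (of_nat ((m - l - j + r) choose r) * w) * of_nat (Stirling (m - l - j + r) r) * (- x) ^ j
       = fact m * (x ^ j / fact j) * ((-1) ^ l / (fact l * w))
           * ((-1) ^ (m - j - l) * fact r * of_nat (Stirling (m - j - l + r) r) / fact (m - j - l + r))"
proof -
  define q where "q = m - l - j"
  have m: "m = l + (j + q)" and q: "m - j - l = q" "m - l - j = q" "m - l = j + q"
    using assms(1) by (auto simp: q_def)
  have choose_m: "of_nat (m choose l) = (fact m / (fact l * fact (j + q)) :: 'a)"
    using binomial_fact[of l m] by (simp add: m)
  have choose_jq: "of_nat ((j + q) choose j) = (fact (j + q) / (fact j * fact q) :: 'a)"
    using binomial_fact[of j "j + q"] by simp
  have choose_qr: "of_nat ((q + r) choose r) = (fact (q + r) / (fact r * fact q) :: 'a)"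
    using binomial_fact[of r "q + r"] by simp
  have "(-1::'a) ^ m * (- x) ^ j = (-1) ^ l * (-1) ^ q * ((-1) * (-1)) ^ j * x ^ j"
    by (simp only: m power_add power_minus[of x] power_mult_distrib mult_ac)
  then have sign: "(-1::'a) ^ m * (- x) ^ j = (-1) ^ l * (-1) ^ q * x ^ j"
    by simp
  have "(-1) ^ m * (of_nat (m choose l) * of_nat ((m - l) choose j))
           / (of_nat ((m - l - j + r) choose r) * w) * of_nat (Stirling (m - l - j + r) r) * (- x) ^ j
      = ((-1) ^ m * (- x) ^ j) * (of_nat (m choose l) * of_nat ((j + q) choose j))
           / (of_nat ((q + r) choose r) * w) * of_nat (Stirling (q + r) r)"
    by (simp only: q add_diff_cancel_left' mult_ac times_divide_eq_left times_divide_eq_right)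
  also have "\<dots> = fact m * (x ^ j / fact j) * ((-1) ^ l / (fact l * w))
           * ((-1) ^ q * fact r * of_nat (Stirling (q + r) r) / fact (q + r))"
    unfolding sign choose_m choose_jq choose_qr using assms(2) by (simp add: field_simps)
  finally show ?thesis unfolding q .
qed

lemma fact_times_coeff_product_eq_summand:
  assumes "j + l \<le> m"
  shows "fact m * (fps_exp x $ j * ((Lif k oo - fps_X) $ l * (((1 - fps_exp (-1)) / fps_X) ^ r) $ (m - j - l)))
       = (-1) ^ m * (of_nat (m choose l) * of_nat ((m - l) choose j))
           / (of_nat ((m - l - j + r) choose r) * (of_nat (l + 1)) powi k)
           * of_nat (S2 (m - l - j + r) r) * (- x) ^ j"
proof -
  have "(of_nat (l + 1) :: real) powi k \<noteq> 0" by simp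
  from summand_eq_coeff_product[OF assms this, where r = r and x = x] show ?thesis
    unfolding fps_nth_one_minus_exp_neg_div_X_power
    by (simp add: S2_def Lif_def fps_compose_uminus' add_ac mult_ac)
qed

theorem theorem1:
  fixes n r :: nat and k :: int and x :: real
  shows "A_tilde r k n x =
    (\<Sum>j = 0..n. (\<Sum>m = j..n. \<Sum>l = 0..m - j.
        (-1) ^ m * (of_nat (m choose l) * of_nat ((m - l) choose j))
          / (of_nat ((m - l - j + r) choose r) * (of_nat (l + 1)) powi k)
          * of_int (S1 n m) * of_nat (S2 (m - l - j + r) r)) * (- x) ^ j)"
proof -
  define M where "M = Lif k oo - fps_X"
  define P where "P = (1 - fps_exp (-1)) / (fps_X :: real fps)"
  define c where "c m j l = of_int (S1 n m) * (fact m * (fps_exp x $ j * (M $ l * (P ^ r) $ (m - j - l))))"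
    for m j l
  have summand: "c m j l = (-1) ^ m * (of_nat (m choose l) * of_nat ((m - l) choose j))
          / (of_nat ((m - l - j + r) choose r) * (of_nat (l + 1)) powi k)
          * of_int (S1 n m) * of_nat (S2 (m - l - j + r) r) * (- x) ^ j"
    if "j + l \<le> m" for m j l
    unfolding c_def M_def P_def fact_times_coeff_product_eq_summand[OF that]
    by (simp only: mult_ac)
  have "A_tilde r k n x = (\<Sum>m = 0..n. of_int (S1 n m) * (fact m * (fps_exp x * (M * P ^ r)) $ m))"
    unfolding A_tilde_def A_gen_eq_compose_ln fact_times_fps_nth_compose_ln M_def P_def
    by (simp only: mult_ac)
  also have "\<dots> = (\<Sum>m = 0..n. \<Sum>j = 0..m. \<Sum>l = 0..m - j. c m j l)"
    by (simp only: c_def fps_mult_nth sum_distrib_left)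
  also have "\<dots> = (\<Sum>j = 0..n. \<Sum>m = j..n. \<Sum>l = 0..m - j. c m j l)"
    by (rule sum_triangle_swap)
  finally show ?thesis
    by (auto simp: sum_distrib_right summand intro!: sum.cong)
qed

end
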